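(* In the setup described in the context, let $x\in T_pM$ induce a $Q$-basis. Let $\psi=\angle(x,Q^2x)$ be the $g$-angle, and assume $\psi\neq\pi/2$. Then $$\tilde r(x)=\frac{1}{\cos\psi}\,r(x)+\frac{1}{8\cos\psi}(3\tilde\tau^*+\tilde\tau-3\tau-\tau^* )+\frac18(3\tilde\tau+\tilde\tau^*-3\tau^*-\tau).$$
   Context: Let $M$ be a 3-dimensional smooth manifold. Fix a coordinate chart $(x^1,x^2,x^3)$ with coordinate vector fields $\partial_i$. Structures: - $g$ is a Riemannian metric with $g(\partial_1,\partial_1)=g(\partial_2,\partial_2)=A$, $g(\partial_3,\partial_3)=B$ and $g(\partial_i,\partial_j)=0$ for $i\ne j$. Here $A,B$ are smooth positive functions. - $Q$ is the $(1,1)$-tensor field with $Q\partial_1=\partial_2$, $Q\partial_2=-\partial_1$, $Q\partial_3=\partial_3$. - $P=Q^2$ and $\tilde g(x,y)=g(x,Py)$. Connections and curvature: - $\nabla$ and $\tilde\nabla$ are the Levi-Civita connections of $g$ and $\tilde g$. - $R(x,y)z=\nabla_x\nabla_yz-\nabla_y\nabla_xz-\nabla_{[x,y]}z$ and $R(x,y,z,t)=g(R(x,y)z,t)$. Analogously $\tilde R(x,y,z,t)=\tilde g(\tilde R(x,y)z,t)$. Ricci tensors and scalar quantities: - $\rho(y,z)=g^{ij}R(e_i,y,z,e_j)$ and $\tilde\rho(y,z)=\tilde g^{ij}\tilde R(e_i,y,z,e_j)$. - $\tau=g^{ij}\rho_{ij}$, $\tau^*=\tilde g^{ij}\rho_{ij}$,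 $\tilde\tau=\tilde g^{ij}\tilde\rho_{ij}$, $\tilde\tau^*=g^{ij}\tilde\rho_{ij}$. Ricci curvatures in a direction: - $r(x)=\rho(x,x)/g(x,x)$ and $\tilde r(x)=\tilde\rho(x,x)/\tilde g(x,x)$. Angles and $Q$-bases: - The $g$-angle is defined by $\cos\angle(u,v)=g(u,v)/\sqrt{g(u,u)g(v,v)}$. - A vector $x$ induces a $Q$-basis if $\{x,Qx,Q^2x\}$ is a basis of $T_pM$. *)

theory Defs
  imports "HOL-Analysis.Analysis"
begin

text \<open>We work in the coordinate chart: its domain is an open set U of R^3 (points of type
  real^3); tangent vectors at a point are given by their components w.r.t. the coordinate
  vector fields. The coordinate indices 1,2,3 are the three (distinct) elements 1,2,3 of the
  index type 3 (note that 3 = 0 in that type, but this is just a label).\<close>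

type_synonym pt = "real^3"

definition pd :: "3 \<Rightarrow> (pt \<Rightarrow> real) \<Rightarrow> pt \<Rightarrow> real" where
  "pd i f p = deriv (\<lambda>t. f (p + t *\<^sub>R axis i 1)) 0"

fun ipd :: "3 list \<Rightarrow> (pt \<Rightarrow> real) \<Rightarrow> pt \<Rightarrow> real" where
  "ipd [] f = f"
| "ipd (i # ks) f = pd i (ipd ks f)"

definition smooth_on :: "pt set \<Rightarrow> (pt \<Rightarrow> real) \<Rightarrow> bool" where
  "smooth_on U f \<longleftrightarrow> (\<forall>ks. continuous_on U (ipd ks f) \<and>
     (\<forall>i p. p \<in> U \<longrightarrow>
        ((\<lambda>t. ipd ks f (p + t *\<^sub>R axis i 1)) has_real_derivative ipd (i # ks) f p) (at 0)))"

text \<open>Matrices: column j holds the components of the image of the j-th coordinate vector.\<close>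
definition Qm :: "real^3^3" where
  "Qm = (\<chi> k j. if k = 2 \<and> j = 1 then 1 else if k = 1 \<and> j = 2 then -1
                 else if k = 3 \<and> j = 3 then 1 else 0)"

definition Pm :: "real^3^3" where
  "Pm = Qm ** Qm"

definition gmet :: "(pt \<Rightarrow> real) \<Rightarrow> (pt \<Rightarrow> real) \<Rightarrow> pt \<Rightarrow> real^3^3" where
  "gmet A B p = (\<chi> i j. if i = j then (if i = 3 then B p else A p) else 0)"

text \<open>tilde g(x,y) = g(x, P y), i.e. tilde g_ij = sum_k g_ik P_kj.\<close>
definition tmet :: "(pt \<Rightarrow> real) \<Rightarrow> (pt \<Rightarrow> real) \<Rightarrow> pt \<Rightarrow> real^3^3" where
  "tmet A B p = gmet A B p ** Pm"

definition bil :: "real^3^3 \<Rightarrow> real^3 \<Rightarrow> real^3 \<Rightarrow> real" where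
  "bil M x y = x \<bullet> (M *v y)"

definition ginv :: "(pt \<Rightarrow> real^3^3) \<Rightarrow> pt \<Rightarrow> real^3^3" where
  "ginv G p = matrix_inv (G p)"

text \<open>Christoffel symbols of the Levi-Civita connection: nabla_{d_i} d_j = sum_k chr G p k i j d_k.\<close>
definition chr :: "(pt \<Rightarrow> real^3^3) \<Rightarrow> pt \<Rightarrow> 3 \<Rightarrow> 3 \<Rightarrow> 3 \<Rightarrow> real" where
  "chr G p k i j = (1/2) * (\<Sum>l\<in>UNIV. ginv G p $ k $ l *
      (pd i (\<lambda>q. G q $ j $ l) p + pd j (\<lambda>q. G q $ i $ l) p - pd l (\<lambda>q. G q $ i $ j) p))"

text \<open>R(d_i,d_j)d_k = nabla_i nabla_j d_k - nabla_j nabla_i d_k = sum_l curv G p i j k l d_l.\<close>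
definition curv :: "(pt \<Rightarrow> real^3^3) \<Rightarrow> pt \<Rightarrow> 3 \<Rightarrow> 3 \<Rightarrow> 3 \<Rightarrow> 3 \<Rightarrow> real" where
  "curv G p i j k l =
     pd i (\<lambda>q. chr G q l j k) p - pd j (\<lambda>q. chr G q l i k) p
     + (\<Sum>m\<in>UNIV. chr G p m j k * chr G p l i m - chr G p m i k * chr G p l j m)"

definition curv4 :: "(pt \<Rightarrow> real^3^3) \<Rightarrow> pt \<Rightarrow> 3 \<Rightarrow> 3 \<Rightarrow> 3 \<Rightarrow> 3 \<Rightarrow> real" where
  "curv4 G p i j k t = (\<Sum>l\<in>UNIV. curv G p i j k l * G p $ l $ t)"

definition ricci :: "(pt \<Rightarrow> real^3^3) \<Rightarrow> pt \<Rightarrow> real^3^3" where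
  "ricci G p = (\<chi> a b. \<Sum>i\<in>UNIV. \<Sum>j\<in>UNIV. ginv G p $ i $ j * curv4 G p i a b j)"

definition contr :: "real^3^3 \<Rightarrow> real^3^3 \<Rightarrow> real" where
  "contr H T = (\<Sum>i\<in>UNIV. \<Sum>j\<in>UNIV. H $ i $ j * T $ i $ j)"

definition ricdir :: "(pt \<Rightarrow> real^3^3) \<Rightarrow> pt \<Rightarrow> real^3 \<Rightarrow> real" where
  "ricdir G p x = bil (ricci G p) x x / bil (G p) x x"

definition gangle :: "real^3^3 \<Rightarrow> real^3 \<Rightarrow> real^3 \<Rightarrow> real" where
  "gangle M u v = arccos (bil M u v / sqrt (bil M u u * bil M v v))"

definition Q_basis :: "real^3 \<Rightarrow> bool" where
  "Q_basis x \<longleftrightarrow> (let S = {x, Qm *v x, Pm *v x} in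
      card S = 3 \<and> independent S \<and> span S = UNIV)"

end

(* Both g = diag(A,A,B) and tilde g = g P = diag(-A,-A,B) are diagonal, and replacing A by -A
   only flips the sign of the Christoffel symbols Gamma^k_ii for which exactly one of i, k is the
   third coordinate. Tracking these signs through the coordinate formula for the Ricci tensor gives
   tilde rho = rho + diag(u,u,w) for some u, w. With n = x1^2 + x2^2 and m = x3^2 one has
   g(x,x) = A n + B m and g(x,Q^2 x) = tilde g(x,x) = -A n + B m, so cos psi is their quotient,
   while the two trace combinations in the formula are 4u/A + 4w/B and -4u/A + 4w/B; what remains
   is elementary algebra. *)
theory Submission
  imports Defs
begin

definition blockdiag :: "real \<Rightarrow> real \<Rightarrow> real^3^3" where
  "blockdiag a b = (\<chi> i j. if i = j then (if i = 3 then b else a) else 0)"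

lemma gmet_eq_blockdiag: "gmet A B = (\<lambda>q. blockdiag (A q) (B q))"
  by (simp add: gmet_def blockdiag_def fun_eq_iff)

lemma Pm_eq_blockdiag: "Pm = blockdiag (-1) 1"
  by (simp add: Pm_def Qm_def blockdiag_def matrix_matrix_mult_def vec_eq_iff forall_3 sum_3)

lemma blockdiag_mult_Pm: "blockdiag a b ** Pm = blockdiag (- a) b"
  by (simp add: Pm_eq_blockdiag blockdiag_def matrix_matrix_mult_def vec_eq_iff forall_3 sum_3)

lemma tmet_eq_blockdiag: "tmet A B = (\<lambda>q. blockdiag (- A q) (B q))"
  by (simp add: tmet_def gmet_eq_blockdiag blockdiag_mult_Pm fun_eq_iff)

lemma matrix_inv_eqI:
  fixes M N :: "'a::comm_ring_1^'n^'n"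
  assumes "M ** N = mat 1" "N ** M = mat 1"
  shows "matrix_inv M = N"
proof -
  have "M ** matrix_inv M = mat 1 \<and> matrix_inv M ** M = mat 1"
    unfolding matrix_inv_def by (rule someI[of _ N]) (use assms in blast)
  then have "matrix_inv M = matrix_inv M ** (M ** N)" "matrix_inv M ** M = mat 1"
    using assms by simp_all
  then show ?thesis by (simp add: matrix_mul_assoc)
qed

lemma matrix_inv_blockdiag:
  "a \<noteq> 0 \<Longrightarrow> b \<noteq> 0 \<Longrightarrow> matrix_inv (blockdiag a b) = blockdiag (1 / a) (1 / b)"
  by (rule matrix_inv_eqI)
    (auto simp: blockdiag_def matrix_matrix_mult_def vec_eq_iff mat_def sum_3 forall_3)

lemma bil_blockdiag: "bil (blockdiag a b) x y = a * (x$1 * y$1 + x$2 * y$2) + b * (x$3 * y$3)"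
  by (simp add: bil_def blockdiag_def inner_vec_def matrix_vector_mult_def sum_3 algebra_simps)

lemma bil_add_left: "bil (M + N) x y = bil M x y + bil N x y"
  by (simp add: bil_def matrix_vector_mult_add_rdistrib inner_add_right)

lemma contr_blockdiag: "contr (blockdiag a b) M = a * (M$1$1 + M$2$2) + b * M$3$3"
  by (simp add: contr_def blockdiag_def sum_3 algebra_simps)

lemma contr_add_right: "contr H (M + N) = contr H M + contr H N"
  by (simp add: contr_def distrib_left sum.distrib)

(* Gamma^k_ij of the metric diag(a,a,b), where da l and db l stand for the partials of a and b. *)
definition christoffel_blockdiag ::
    "real \<Rightarrow> real \<Rightarrow> (3 \<Rightarrow> real) \<Rightarrow> (3 \<Rightarrow> real) \<Rightarrow> 3 \<Rightarrow> 3 \<Rightarrow> 3 \<Rightarrow> real" where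
  "christoffel_blockdiag a b da db k i j =
     (let c = (\<lambda>l. if l = 3 then b else a); dc = (\<lambda>l. if l = 3 then db else da)
      in 1 / (2 * c k) * ((if j = k then dc k i else 0) + (if i = k then dc k j else 0)
                          - (if i = j then dc i k else 0)))"

lemma pd_blockdiag_entry:
  "pd l (\<lambda>q. blockdiag (a q) (b q) $ i $ j) p
     = (if i = j then (if i = 3 then pd l b p else pd l a p) else 0)"
  by (simp add: blockdiag_def pd_def)

lemma chr_blockdiag:
  assumes "a p \<noteq> 0" "b p \<noteq> 0"
  shows "chr (\<lambda>q. blockdiag (a q) (b q)) p k i j
           = christoffel_blockdiag (a p) (b p) (\<lambda>l. pd l a p) (\<lambda>l. pd l b p) k i j"
  unfolding chr_def ginv_def matrix_inv_blockdiag[OF assms] pd_blockdiag_entry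
  using assms exhaust_3[of k] exhaust_3[of i] exhaust_3[of j]
  by (auto simp: sum_3 christoffel_blockdiag_def blockdiag_def field_simps)

lemma christoffel_blockdiag_uminus:
  assumes "a \<noteq> 0" "b \<noteq> 0"
  shows "christoffel_blockdiag (- a) b (\<lambda>l. - da l) db k i j
           = (if i = j \<and> (i = 3 \<longleftrightarrow> k \<noteq> 3) then -1 else 1) * christoffel_blockdiag a b da db k i j"
  using assms exhaust_3[of k] exhaust_3[of i] exhaust_3[of j]
  by (auto simp: christoffel_blockdiag_def field_simps)

definition ricci_quadratic :: "(3 \<Rightarrow> 3 \<Rightarrow> 3 \<Rightarrow> real) \<Rightarrow> 3 \<Rightarrow> 3 \<Rightarrow> real" where
  "ricci_quadratic \<Gamma> a b = (\<Sum>i\<in>UNIV. \<Sum>m\<in>UNIV. \<Gamma> m a b * \<Gamma> i i m - \<Gamma> m i b * \<Gamma> i a m)"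

lemma ricci_blockdiag:
  fixes a b :: "pt \<Rightarrow> real"
  defines "G \<equiv> \<lambda>q. blockdiag (a q) (b q)"
  assumes "a p \<noteq> 0" "b p \<noteq> 0"
  shows "ricci G p $ x $ y
           = (\<Sum>i\<in>UNIV. pd i (\<lambda>q. chr G q i x y) p) - (\<Sum>i\<in>UNIV. pd x (\<lambda>q. chr G q i i y) p)
             + ricci_quadratic
                 (christoffel_blockdiag (a p) (b p) (\<lambda>l. pd l a p) (\<lambda>l. pd l b p)) x y"
proof -
  have "ricci G p $ x $ y
          = (\<Sum>i\<in>UNIV. pd i (\<lambda>q. chr G q i x y) p) - (\<Sum>i\<in>UNIV. pd x (\<lambda>q. chr G q i i y) p)
            + ricci_quadratic (chr G p) x y"
    unfolding ricci_def curv4_def ginv_def G_def matrix_inv_blockdiag[OF assms(2,3)]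
    using assms(2,3) by (simp add: curv_def blockdiag_def sum_3 ricci_quadratic_def)
  then show ?thesis
    unfolding G_def chr_blockdiag[of a p b, OF assms(2,3)] .
qed

lemma ricci_quadratic_uminus_offdiag:
  assumes "a \<noteq> 0" "b \<noteq> 0" "x \<noteq> y"
  shows "ricci_quadratic (christoffel_blockdiag (- a) b (\<lambda>l. - da l) db) x y
           = ricci_quadratic (christoffel_blockdiag a b da db) x y"
  using assms exhaust_3[of x] exhaust_3[of y]
  by (auto simp: ricci_quadratic_def christoffel_blockdiag_def sum_3 field_simps)

lemma ricci_quadratic_uminus_diag:
  assumes "a \<noteq> 0" "b \<noteq> 0"
  shows "ricci_quadratic (christoffel_blockdiag (- a) b (\<lambda>l. - da l) db) 1 1
           - ricci_quadratic (christoffel_blockdiag a b da db) 1 1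
         = ricci_quadratic (christoffel_blockdiag (- a) b (\<lambda>l. - da l) db) 2 2
           - ricci_quadratic (christoffel_blockdiag a b da db) 2 2"
  using assms by (simp add: ricci_quadratic_def christoffel_blockdiag_def sum_3 field_simps)

lemma christoffel_blockdiag_311_eq_322:
  "christoffel_blockdiag a b da db 3 1 1 = christoffel_blockdiag a b da db 3 2 2"
  by (simp add: christoffel_blockdiag_def)

lemma pd_cong_open:
  assumes "open U" "p \<in> U" "\<forall>q\<in>U. f q = h q"
  shows "pd i f p = pd i h p"
  unfolding pd_def
proof (rule deriv_cong_ev[OF _ refl])
  let ?c = "\<lambda>t::real. p + t *\<^sub>R axis i 1"
  have "open (?c -` U)"
    using assms(1) by (intro open_vimage continuous_intros) auto
  moreover have "0 \<in> ?c -` U"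
    using assms(2) by simp
  ultimately show "\<forall>\<^sub>F t in nhds 0. f (?c t) = h (?c t)"
    unfolding eventually_nhds using assms(3) by blast
qed

(* Without differentiability pd is an unspecified value, so this is the one place where smoothness
   is used (and only that of A). *)
lemma pd_uminus:
  assumes "smooth_on U f" "p \<in> U"
  shows "pd i (\<lambda>q. - f q) p = - pd i f p"
proof -
  have "((\<lambda>t. f (p + t *\<^sub>R axis i 1)) has_real_derivative pd i f p) (at 0)"
    using assms unfolding smooth_on_def by (metis ipd.simps)
  then show ?thesis
    unfolding pd_def by (intro DERIV_imp_deriv DERIV_minus)
qed

locale blockdiag_chart =
  fixes U :: "pt set" and A B :: "pt \<Rightarrow> real"
  assumes open_U: "open U" and smooth_A: "smooth_on U A"
    and A_nonzero: "\<forall>q\<in>U. A q \<noteq> 0" and B_nonzero: "\<forall>q\<in>U. B q \<noteq> 0"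
begin

lemma chr_gmet:
  "q \<in> U \<Longrightarrow> chr (gmet A B) q
     = christoffel_blockdiag (A q) (B q) (\<lambda>l. pd l A q) (\<lambda>l. pd l B q)"
  using A_nonzero B_nonzero by (simp add: gmet_eq_blockdiag chr_blockdiag fun_eq_iff)

lemma chr_tmet:
  "q \<in> U \<Longrightarrow> chr (tmet A B) q
     = christoffel_blockdiag (- A q) (B q) (\<lambda>l. - pd l A q) (\<lambda>l. pd l B q)"
  using A_nonzero B_nonzero chr_blockdiag[of "\<lambda>q. - A q" q B]
  by (simp add: tmet_eq_blockdiag pd_uminus[OF smooth_A] fun_eq_iff)

lemma pd_chr_tmet:
  assumes "p \<in> U" "\<not> (i = j \<and> (i = 3 \<longleftrightarrow> k \<noteq> 3))"
  shows "pd l (\<lambda>q. chr (tmet A B) q k i j) p = pd l (\<lambda>q. chr (gmet A B) q k i j) p"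
  using assms A_nonzero B_nonzero
  by (intro pd_cong_open[OF open_U]) (auto simp: chr_tmet chr_gmet christoffel_blockdiag_uminus)

lemma pd_chr_311_eq_322:
  assumes "p \<in> U" "G = gmet A B \<or> G = tmet A B"
  shows "pd l (\<lambda>q. chr G q 3 1 1) p = pd l (\<lambda>q. chr G q 3 2 2) p"
  using assms
  by (intro pd_cong_open[OF open_U])
    (auto simp: chr_tmet chr_gmet christoffel_blockdiag_311_eq_322)

lemma ricci_gmet:
  "p \<in> U \<Longrightarrow> ricci (gmet A B) p $ x $ y
     = (\<Sum>i\<in>UNIV. pd i (\<lambda>q. chr (gmet A B) q i x y) p)
       - (\<Sum>i\<in>UNIV. pd x (\<lambda>q. chr (gmet A B) q i i y) p)
       + ricci_quadratic (christoffel_blockdiag (A p) (B p) (\<lambda>l. pd l A p) (\<lambda>l. pd l B p)) x y"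
  using A_nonzero B_nonzero by (simp add: gmet_eq_blockdiag ricci_blockdiag)

lemma ricci_tmet:
  "p \<in> U \<Longrightarrow> ricci (tmet A B) p $ x $ y
     = (\<Sum>i\<in>UNIV. pd i (\<lambda>q. chr (tmet A B) q i x y) p)
       - (\<Sum>i\<in>UNIV. pd x (\<lambda>q. chr (tmet A B) q i i y) p)
       + ricci_quadratic
           (christoffel_blockdiag (- A p) (B p) (\<lambda>l. - pd l A p) (\<lambda>l. pd l B p)) x y"
  using A_nonzero B_nonzero ricci_blockdiag[of "\<lambda>q. - A q" p B]
  by (simp add: tmet_eq_blockdiag pd_uminus[OF smooth_A])

lemma ricci_tmet_offdiag:
  assumes "p \<in> U" "x \<noteq> y"
  shows "ricci (tmet A B) p $ x $ y = ricci (gmet A B) p $ x $ y"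
  using assms A_nonzero B_nonzero
  by (simp add: ricci_gmet ricci_tmet pd_chr_tmet ricci_quadratic_uminus_offdiag)

lemma ricci_tmet_diag:
  assumes "p \<in> U"
  shows "ricci (tmet A B) p $ 1 $ 1 - ricci (gmet A B) p $ 1 $ 1
         = ricci (tmet A B) p $ 2 $ 2 - ricci (gmet A B) p $ 2 $ 2"
  using assms A_nonzero B_nonzero ricci_quadratic_uminus_diag
    pd_chr_311_eq_322[of p "gmet A B" 3] pd_chr_311_eq_322[of p "tmet A B" 3]
  by (simp add: ricci_gmet ricci_tmet sum_3 pd_chr_tmet)

lemma ricci_tmet_eq_add_blockdiag:
  assumes "p \<in> U"
  obtains u w where "ricci (tmet A B) p = ricci (gmet A B) p + blockdiag u w"
proof
  let ?d = "\<lambda>i. ricci (tmet A B) p $ i $ i - ricci (gmet A B) p $ i $ i"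
  show "ricci (tmet A B) p = ricci (gmet A B) p + blockdiag (?d 1) (?d 3)"
    using ricci_tmet_offdiag[OF assms] ricci_tmet_diag[OF assms]
    by (auto simp: vec_eq_iff forall_3 blockdiag_def)
qed

end

lemma Q_basis_nonzero: "Q_basis x \<Longrightarrow> x \<noteq> 0"
  unfolding Q_basis_def Let_def by (auto simp: dependent_zero)

lemma bil_blockdiag_Pm: "bil (blockdiag a b) x (Pm *v x) = bil (blockdiag (- a) b) x x"
  by (simp add: bil_def matrix_vector_mul_assoc blockdiag_mult_Pm)

lemma bil_blockdiag_Pm_Pm: "bil (blockdiag a b) (Pm *v x) (Pm *v x) = bil (blockdiag a b) x x"
  unfolding bil_blockdiag by (simp add: Pm_eq_blockdiag blockdiag_def matrix_vector_mult_def sum_3)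

lemma bil_blockdiag_pos:
  assumes "a > 0" "b > 0" "x \<noteq> 0"
  shows "bil (blockdiag a b) x x > 0"
proof -
  have "0 < x$1 * x$1 + x$2 * x$2 \<or> 0 < x$3 * x$3"
    using assms(3) by (auto simp: vec_eq_iff forall_3 sum_squares_gt_zero_iff)
      (metis not_real_square_gt_zero)
  then show ?thesis
    using assms(1,2) by (auto simp: bil_blockdiag intro: add_pos_nonneg add_nonneg_pos)
qed

lemma gangle_blockdiag_Pm:
  assumes "a > 0" "b > 0" "x \<noteq> 0"
  shows "gangle (blockdiag a b) x (Pm *v x)
           = arccos (bil (blockdiag (- a) b) x x / bil (blockdiag a b) x x)"
  using bil_blockdiag_pos[OF assms]
  by (simp add: gangle_def bil_blockdiag_Pm bil_blockdiag_Pm_Pm)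

lemma cos_gangle_blockdiag_Pm:
  assumes "a > 0" "b > 0" "x \<noteq> 0"
  shows "cos (gangle (blockdiag a b) x (Pm *v x))
           = bil (blockdiag (- a) b) x x / bil (blockdiag a b) x x"
proof -
  have "\<bar>bil (blockdiag (- a) b) x x\<bar> \<le> bil (blockdiag a b) x x"
    using assms(1,2) by (simp add: bil_blockdiag abs_le_iff)
  then show ?thesis
    using bil_blockdiag_pos[OF assms]
    by (simp add: gangle_blockdiag_Pm[OF assms] cos_arccos_abs)
qed

lemma bil_blockdiag_uminus_neq_0:
  assumes "a > 0" "b > 0" "x \<noteq> 0" "gangle (blockdiag a b) x (Pm *v x) \<noteq> pi / 2"
  shows "bil (blockdiag (- a) b) x x \<noteq> 0"
  using assms by (auto simp: gangle_blockdiag_Pm)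

lemma ricdir_tmet_identity:
  fixes a b n m u w G T X :: real
  assumes "a \<noteq> 0" "b \<noteq> 0" "G \<noteq> 0" "T \<noteq> 0" "G = a * n + b * m" "T = - a * n + b * m"
  shows "(X + (u * n + w * m)) / T
     = 1 / (T / G) * (X / G) + 1 / (8 * (T / G)) * (4 * u / a + 4 * w / b)
       + 1 / 8 * (- 4 * u / a + 4 * w / b)"
proof -
  let ?P = "4 * u / a + 4 * w / b" and ?Q = "- 4 * u / a + 4 * w / b"
  have "G * ?P + T * ?Q = 8 * (u * n + w * m)"
    using assms(1,2) unfolding assms(5,6) by (simp add: field_simps)
  moreover have "1 / (T / G) * (X / G) + 1 / (8 * (T / G)) * ?P + 1 / 8 * ?Q
      = X / T + (G * ?P + T * ?Q) / (8 * T)"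
    using assms(3,4) by (simp add: field_simps)
  ultimately show ?thesis
    by (simp add: add_divide_distrib)
qed

theorem theorem5p5:
  fixes U :: "(real^3) set" and A B :: "real^3 \<Rightarrow> real" and p x :: "real^3"
  assumes "open U" and "p \<in> U"
    and "smooth_on U A" and "smooth_on U B"
    and "\<forall>q\<in>U. A q > 0" and "\<forall>q\<in>U. B q > 0"
    and "Q_basis x"
    and "gangle (gmet A B p) x (Pm *v x) \<noteq> pi / 2"
  shows "let g = gmet A B; gt = tmet A B; \<psi> = gangle (g p) x (Pm *v x);
             \<tau> = contr (ginv g p) (ricci g p);
             \<tau>s = contr (ginv gt p) (ricci g p);
             \<tau>t = contr (ginv gt p) (ricci gt p);
             \<tau>ts = contr (ginv g p) (ricci gt p)
         in ricdir gt p x =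
              1 / cos \<psi> * ricdir g p x
              + 1 / (8 * cos \<psi>) * (3 * \<tau>ts + \<tau>t - 3 * \<tau> - \<tau>s)
              + 1 / 8 * (3 * \<tau>t + \<tau>ts - 3 * \<tau>s - \<tau>)"
proof -
  interpret blockdiag_chart U A B
    using assms(1,3,5,6) by unfold_locales auto
  obtain u w where R: "ricci (tmet A B) p = ricci (gmet A B) p + blockdiag u w"
    using ricci_tmet_eq_add_blockdiag[OF assms(2)] .
  define a b n m where "a = A p" and "b = B p"
    and "n = x$1 * x$1 + x$2 * x$2" and "m = x$3 * x$3"
  have ab: "a > 0" "b > 0" and "x \<noteq> 0"
    using assms(2,5,6,7) Q_basis_nonzero by (auto simp: a_def b_def)
  have g: "gmet A B p = blockdiag a b" and gt: "tmet A B p = blockdiag (- a) b"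
    by (simp_all add: gmet_eq_blockdiag tmet_eq_blockdiag a_def b_def)
  have G: "bil (blockdiag a b) x x = a * n + b * m"
    and T: "bil (blockdiag (- a) b) x x = - a * n + b * m"
    and E: "bil (blockdiag u w) x x = u * n + w * m"
    by (simp_all add: bil_blockdiag n_def m_def)
  have "- a * n + b * m \<noteq> 0" "a * n + b * m \<noteq> 0"
    using bil_blockdiag_uminus_neq_0[OF ab \<open>x \<noteq> 0\<close>] bil_blockdiag_pos[OF ab \<open>x \<noteq> 0\<close>]
      assms(8) by (simp_all add: g G T)
  moreover have "contr (ginv (gmet A B) p) (blockdiag u w) = 2 * u / a + w / b"
    and "contr (ginv (tmet A B) p) (blockdiag u w) = - 2 * u / a + w / b"
    using ab
    by (simp_all add: ginv_def g gt matrix_inv_blockdiag contr_blockdiag,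
        simp_all add: blockdiag_def)
  ultimately show ?thesis
    using ricdir_tmet_identity[of a b "a * n + b * m" "- a * n + b * m" n m]
      cos_gangle_blockdiag_Pm[OF ab \<open>x \<noteq> 0\<close>] ab
    by (simp add: Let_def ricdir_def R g gt bil_add_left contr_add_right G T E)
qed

end
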